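(* The monoid $\operatorname{NDPF}^{(1)}_N$ is generated by the functions $f_0,\dots,f_{N-1}$, and these satisfy the relations $f_i^2=f_i$; $f_if_j=f_jf_i$ whenever $i,j$ are not adjacent modulo $N$; and $f_if_{i+1}f_i=f_{i+1}f_if_{i+1}=f_{i+1}f_i$, with indices taken modulo $N$.
   Context: $\operatorname{NDPF}^{(1)}_N$ is the set of functions $f:\mathbb{Z}\to\mathbb{Z}$ that are regressive ($f(i)\le i$), order preserving ($i\le j\Rightarrow f(i)\le f(j)$) and skew periodic ($f(i+N)=f(i)+N$), excluding the shift functions $i\mapsto i-t$ with $t\neq0$; it is a monoid under composition, with functions acting on the right: $fg$ means apply $f$ first, then $g$. For $i\in\{0,\dots,N-1\}$, $f_i(j)=j-1$ if $j\equiv i+1 \pmod N$ and $f_i(j)=j$ otherwise. *)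

theory Defs
  imports Main
begin

definition NDPF :: "nat \<Rightarrow> (int \<Rightarrow> int) set" where
  "NDPF N = {f. (\<forall>i. f i \<le> i)
              \<and> (\<forall>i j. i \<le> j \<longrightarrow> f i \<le> f j)
              \<and> (\<forall>i. f (i + int N) = f i + int N)
              \<and> \<not> (\<exists>t. t \<noteq> 0 \<and> (\<forall>i. f i = i - t))}"

definition fgen :: "nat \<Rightarrow> nat \<Rightarrow> int \<Rightarrow> int" where
  "fgen N i j = (if j mod int N = int ((i + 1) mod N) then j - 1 else j)"

text \<open>Monoid product with right action: mul f g means "apply f first, then g".\<close>
definition mul :: "(int \<Rightarrow> int) \<Rightarrow> (int \<Rightarrow> int) \<Rightarrow> (int \<Rightarrow> int)" where
  "mul f g = g \<circ> f"

fun word :: "nat \<Rightarrow> nat list \<Rightarrow> (int \<Rightarrow> int)" where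
  "word N [] = id"
| "word N (i # is) = mul (fgen N i) (word N is)"

end

theory Submission
  imports Defs
begin

text \<open>The relations are checked pointwise: \<open>f\<^sub>i\<close> lowers exactly the residue class of \<open>i + 1\<close>
by one, so only the classes of \<open>i\<close>, \<open>i + 1\<close>, \<open>i + 2\<close> interact, and they are distinct once
\<open>N \<ge> 3\<close>. Every word in the generators is regressive, order preserving and skew periodic, and a
nonempty word is not injective, hence not a shift. Conversely, a function \<open>f \<noteq> id\<close> of the monoid
has a plateau end \<open>f (x - 1) = f x < f (x + 1)\<close>; raising \<open>f\<close> on the residue class of \<open>x\<close> gives
\<open>g\<close> in the monoid with \<open>f = f\<^sub>i g\<close> for \<open>i + 1 \<equiv> x\<close>, and \<open>g\<close> has strictly smaller defect
\<open>\<Sum>y\<in>{0..<N}. y - g y\<close>, so induction on the defect writes \<open>f\<close> as a word.\<close>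

lemma fgen_eq: "fgen N i y = (if int N dvd y - int i - 1 then y - 1 else y)"
  unfolding fgen_def by (simp add: zmod_int mod_eq_dvd_iff diff_diff_eq add.commute)

lemma fgen_mod: "fgen N (i mod N) = fgen N i"
  unfolding fgen_def by (simp add: mod_Suc_eq)

lemma fgen_idem:
  assumes "2 \<le> N"
  shows "fgen N i \<circ> fgen N i = fgen N i"
proof
  fix y
  have N_ndvd_1: "\<not> int N dvd 1" using assms by simp
  show "(fgen N i \<circ> fgen N i) y = fgen N i y"
    by (auto simp: fgen_eq) (smt (verit) dvd_diff_right_iff N_ndvd_1)
qed

lemma fgen_comm:
  assumes "\<not> int N dvd int j - int i - 1" "\<not> int N dvd int i - int j - 1"
  shows "fgen N i \<circ> fgen N j = fgen N j \<circ> fgen N i"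
proof
  fix y
  show "(fgen N i \<circ> fgen N j) y = (fgen N j \<circ> fgen N i) y"
    using assms by (auto simp: fgen_eq) (smt (verit) dvd_diff_right_iff)+
qed

lemma fgen_braid:
  assumes "3 \<le> N"
  shows "fgen N i \<circ> fgen N (Suc i) \<circ> fgen N i = fgen N i \<circ> fgen N (Suc i)"
    and "fgen N (Suc i) \<circ> fgen N i \<circ> fgen N (Suc i) = fgen N i \<circ> fgen N (Suc i)"
proof -
  have "\<not> int N dvd 1" "\<not> int N dvd 2" using assms zdvd_imp_le[of "int N" 2] by auto
  then show "fgen N i \<circ> fgen N (Suc i) \<circ> fgen N i = fgen N i \<circ> fgen N (Suc i)"
    and "fgen N (Suc i) \<circ> fgen N i \<circ> fgen N (Suc i) = fgen N i \<circ> fgen N (Suc i)"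
    by (auto simp: fgen_eq fun_eq_iff) (smt (verit) dvd_diff_right_iff)+
qed

lemma eq_Suc_mod_iff_dvd:
  assumes "j < N"
  shows "j = (i + 1) mod N \<longleftrightarrow> int N dvd int j - int i - 1"
proof -
  have "j = (i + 1) mod N \<longleftrightarrow> int (j mod N) = int ((i + 1) mod N)"
    using assms by simp
  also have "\<dots> \<longleftrightarrow> int j mod int N = (int i + 1) mod int N"
    by (simp add: zmod_int add.commute)
  finally show ?thesis by (simp add: mod_eq_dvd_iff diff_diff_eq)
qed

lemma fgen_comm_nonadjacent:
  assumes "i < N" "j < N" "j \<noteq> (i + 1) mod N" "i \<noteq> (j + 1) mod N"
  shows "fgen N i \<circ> fgen N j = fgen N j \<circ> fgen N i"
proof -
  have "\<not> int N dvd int j - int i - 1" "\<not> int N dvd int i - int j - 1"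
    using assms eq_Suc_mod_iff_dvd by blast+
  then show ?thesis by (rule fgen_comm)
qed

definition regressive :: "(int \<Rightarrow> int) \<Rightarrow> bool" where
  "regressive f \<longleftrightarrow> (\<forall>i. f i \<le> i)"

definition skew_periodic :: "nat \<Rightarrow> (int \<Rightarrow> int) \<Rightarrow> bool" where
  "skew_periodic N f \<longleftrightarrow> (\<forall>i. f (i + int N) = f i + int N)"

lemma NDPF_iff:
  "f \<in> NDPF N \<longleftrightarrow> regressive f \<and> mono f \<and> skew_periodic N f \<and> (\<forall>t. (\<forall>i. f i = i - t) \<longrightarrow> t = 0)"
  unfolding NDPF_def regressive_def skew_periodic_def mono_def by blast

lemma word_Cons: "word N (i # w) = word N w \<circ> fgen N i"
  by (simp add: mul_def)

lemma mono_fgen: "mono (fgen N i)"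
proof
  fix x y :: int
  assume "x \<le> y"
  then show "fgen N i x \<le> fgen N i y" by (cases "x = y") (auto simp: fgen_eq)
qed

lemma skew_periodic_fgen: "skew_periodic N (fgen N i)"
  by (simp add: skew_periodic_def fgen_def)

lemma regressive_word: "regressive (word N w)"
  by (induction w) (auto simp: regressive_def fgen_eq mul_def intro: order_trans)

lemma mono_word: "mono (word N w)"
  by (induction w) (use mono_fgen in \<open>auto simp: mono_def mul_def\<close>)

lemma skew_periodic_word: "skew_periodic N (word N w)"
  by (induction w) (use skew_periodic_fgen in \<open>simp_all add: skew_periodic_def mul_def\<close>)

lemma not_inj_fgen:
  assumes "2 \<le> N"
  shows "\<not> inj (fgen N i)"
proof -
  have "fgen N i (int i + 1) = int i" "fgen N i (int i) = int i"
    using assms by (simp_all add: fgen_eq)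
  then show ?thesis
    by (metis inj_eq add_cancel_left_right zero_neq_one)
qed

lemma not_inj_word: "2 \<le> N \<Longrightarrow> w \<noteq> [] \<Longrightarrow> \<not> inj (word N w)"
  by (cases w) (auto simp: word_Cons simp del: word.simps dest: inj_on_imageI2 not_inj_fgen)

lemma word_in_NDPF:
  assumes "2 \<le> N"
  shows "word N w \<in> NDPF N"
proof -
  have "t = 0" if shift: "\<forall>i. word N w i = i - t" for t
  proof -
    have "inj (word N w)" using shift by (simp add: inj_def)
    then have "w = []" using not_inj_word[OF assms] by blast
    then show "t = 0" using shift by simp
  qed
  then show ?thesis
    by (simp add: NDPF_iff regressive_word mono_word skew_periodic_word)
qed

lemma skew_periodic_mult:
  assumes "skew_periodic N f"
  shows "f (y + int N * q) = f y + int N * q"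
proof (induction q rule: int_induct[where k = 0])
  case (step1 q)
  then show ?case
    using assms[unfolded skew_periodic_def, rule_format, of "y + int N * q"]
    by (simp add: algebra_simps)
next
  case (step2 q)
  then show ?case
    using assms[unfolded skew_periodic_def, rule_format, of "y + int N * (q - 1)"]
    by (simp add: algebra_simps)
qed simp

lemma increasing_int_bound:
  fixes f :: "int \<Rightarrow> int"
  assumes "\<And>z. f z < f (z + 1)" "a \<le> b"
  shows "f a + (b - a) \<le> f b"
  using assms(2)
proof (induction b rule: int_ge_induct)
  case (step b)
  then show ?case using assms(1)[of b] by simp
qed simp

lemma NDPF_collapse:
  assumes f: "f \<in> NDPF N" and "0 < N" "f \<noteq> id"
  shows "\<exists>z. f (z - 1) = f z"
proof (rule ccontr)
  assume no_collapse: "\<nexists>z. f (z - 1) = f z"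
  have mono: "mono f" and skew: "skew_periodic N f"
    and shift: "\<And>t. \<forall>i. f i = i - t \<Longrightarrow> t = 0"
    using f by (auto simp: NDPF_iff)
  have incr: "f z < f (z + 1)" for z
  proof -
    have "f (z + 1 - 1) \<noteq> f (z + 1)" using no_collapse by blast
    then show ?thesis using monoD[OF mono, of z "z + 1"] by simp
  qed
  have unit_step: "f (z + 1) = f z + 1" for z
  proof -
    have "f (z + 1) + (int N - 1) \<le> f (z + int N)"
      using increasing_int_bound[of f, OF incr, of "z + 1" "z + int N"] \<open>0 < N\<close> by simp
    then show ?thesis
      using incr[of z] skew by (simp add: skew_periodic_def)
  qed
  have linear: "f z = z + f 0" for z
  proof (induction z rule: int_induct[where k = 0])
    case (step2 z)
    then show ?case using unit_step[of "z - 1"] by simp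
  qed (simp_all add: unit_step)
  have "\<forall>i. f i = i - (- f 0)"
  proof
    fix i
    show "f i = i - (- f 0)" using linear[of i] by simp
  qed
  then have "- f 0 = 0" by (rule shift)
  have "f = id"
  proof
    fix z
    show "f z = id z" using linear[of z] \<open>- f 0 = 0\<close> by simp
  qed
  with \<open>f \<noteq> id\<close> show False ..
qed

lemma NDPF_plateau_end:
  assumes f: "f \<in> NDPF N" and "0 < N" and z: "f (z - 1) = f z"
  shows "\<exists>x. f (x - 1) = f x \<and> f x < f (x + 1)"
proof -
  have mono: "mono f" and skew: "skew_periodic N f" using f by (auto simp: NDPF_iff)
  have "f (z + int N) \<noteq> f (z - 1)" "\<not> f (z + int 0) \<noteq> f (z - 1)"
    using skew z \<open>0 < N\<close> by (simp_all add: skew_periodic_def)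
  then obtain k where k: "\<forall>i\<le>k. f (z + int i) = f (z - 1)" "f (z + int (Suc k)) \<noteq> f (z - 1)"
    using ex_least_nat_less[where P = "\<lambda>k. f (z + int k) \<noteq> f (z - 1)"] by blast
  define x where "x = z + int k"
  have "f (z - 1) \<le> f (x - 1)" "f (x - 1) \<le> f x" "f x \<le> f (x + 1)"
    using monoD[OF mono] x_def by simp_all
  moreover have "f x = f (z - 1)" "f (x + 1) \<noteq> f (z - 1)"
    using k x_def by (simp_all add: ac_simps)
  ultimately show ?thesis by (intro exI[of _ x]) simp
qed

text \<open>The cofactor \<open>g\<close> in \<open>f = f\<^sub>i g\<close>, where \<open>f\<^sub>i\<close> lowers the class of \<open>x\<close>: it agrees with \<open>f\<close>
off that class and on it takes the value \<open>f (y + 1)\<close>, capped by regressivity.\<close>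
definition strip :: "nat \<Rightarrow> int \<Rightarrow> (int \<Rightarrow> int) \<Rightarrow> int \<Rightarrow> int" where
  "strip N x f y = (if int N dvd y - x then min y (f (y + 1)) else f y)"

lemma strip_in_NDPF:
  assumes f: "f \<in> NDPF N" and N: "2 \<le> N"
  shows "strip N x f \<in> NDPF N"
proof -
  have reg: "regressive f" and mono: "mono f" and skew: "skew_periodic N f"
    using f by (auto simp: NDPF_iff)
  have "regressive (strip N x f)"
    using reg by (simp add: regressive_def strip_def)
  moreover have "mono (strip N x f)"
  proof
    fix a b :: int
    assume "a \<le> b"
    show "strip N x f a \<le> strip N x f b"
    proof (cases "a = b")
      case False
      with \<open>a \<le> b\<close> have "a + 1 \<le> b" by simp
      then show ?thesis
        using \<open>a \<le> b\<close> reg[unfolded regressive_def, rule_format, of a]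
          monoD[OF mono, of a b] monoD[OF mono, of "a + 1" b]
          monoD[OF mono, of a "b + 1"] monoD[OF mono, of "a + 1" "b + 1"]
        by (auto simp: strip_def)
    qed simp
  qed
  moreover have "skew_periodic N (strip N x f)"
  proof -
    have "f (y + int N + 1) = f (y + 1) + int N" for y
      using skew[unfolded skew_periodic_def, rule_format, of "y + 1"] by (simp add: ac_simps)
    moreover have "int N dvd y + int N - x \<longleftrightarrow> int N dvd y - x" for y
      using dvd_add_left_iff[of "int N" "int N" "y - x"] by (simp add: algebra_simps)
    ultimately show ?thesis
      using skew by (simp add: skew_periodic_def strip_def min_add_distrib_left)
  qed
  moreover have "t = 0" if shift: "\<forall>y. strip N x f y = y - t" for t
  proof -
    have "\<not> int N dvd x + 1 - x" using N by simp
    then have "f (x + 1) = x + 1 - t"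
      using shift[rule_format, of "x + 1"] by (simp add: strip_def)
    then have "min x (x + 1 - t) = x - t"
      using shift[rule_format, of x] by (simp add: strip_def)
    then show "t = 0" by linarith
  qed
  ultimately show ?thesis by (simp add: NDPF_iff)
qed

lemma ex_fgen_lowering_class:
  assumes "0 < N"
  shows "\<exists>i<N. \<forall>y. fgen N i y = (if int N dvd y - x then y - 1 else y)"
proof (intro exI conjI allI)
  define i where "i = nat ((x - 1) mod int N)"
  show "i < N" using assms by (simp add: i_def nat_less_iff)
  have "int i = (x - 1) mod int N" using assms by (simp add: i_def)
  then have "y - int i - 1 = (y - x) + ((x - 1) - (x - 1) mod int N)" for y
    by simp
  then have "int N dvd y - int i - 1 \<longleftrightarrow> int N dvd y - x" for y
    by (metis dvd_add_left_iff dvd_minus_mod)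
  then show "fgen N i y = (if int N dvd y - x then y - 1 else y)" for y
    by (simp add: fgen_eq)
qed

lemma strip_factor:
  assumes skew: "skew_periodic N f" and N: "2 \<le> N" and plateau: "f (x - 1) = f x"
    and fgen_i: "\<forall>y. fgen N i y = (if int N dvd y - x then y - 1 else y)"
  shows "f = mul (fgen N i) (strip N x f)"
proof
  fix y
  show "f y = mul (fgen N i) (strip N x f) y"
  proof (cases "int N dvd y - x")
    case True
    then obtain q where y: "y = x + int N * q" by (metis dvd_def diff_add_cancel add.commute)
    have "\<not> int N dvd y - 1 - x"
      using True N dvd_diff_right_iff[OF True, of 1] by (simp add: algebra_simps)
    then have "mul (fgen N i) (strip N x f) y = f (x - 1 + int N * q)"
      using True fgen_i y by (simp add: mul_def strip_def algebra_simps)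
    also have "\<dots> = f y"
      using skew_periodic_mult[OF skew] plateau y by simp
    finally show ?thesis by simp
  next
    case False
    then show ?thesis using fgen_i by (simp add: mul_def strip_def)
  qed
qed

definition defect :: "nat \<Rightarrow> (int \<Rightarrow> int) \<Rightarrow> int" where
  "defect N f = (\<Sum>y\<in>{0..<int N}. y - f y)"

lemma defect_nonneg: "regressive f \<Longrightarrow> 0 \<le> defect N f"
  unfolding defect_def regressive_def by (intro sum_nonneg) auto

lemma defect_strip_less:
  assumes f: "f \<in> NDPF N" and "0 < N"
    and plateau: "f (x - 1) = f x" and rise: "f x < f (x + 1)"
  shows "defect N (strip N x f) < defect N f"
proof -
  have reg: "regressive f" and mono: "mono f" and skew: "skew_periodic N f"
    using f by (auto simp: NDPF_iff)
  define r q where "r = x mod int N" and "q = x div int N"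
  have x: "x = r + int N * q" by (simp add: r_def q_def)
  have "f x < x"
    using plateau reg[unfolded regressive_def, rule_format, of "x - 1"] by simp
  then have "f r < min r (f (r + 1))"
    using rise skew_periodic_mult[OF skew, of r q] skew_periodic_mult[OF skew, of "r + 1" q] x
    by (simp add: algebra_simps)
  moreover have "int N dvd r - x" using x by simp
  ultimately have "r - strip N x f r < r - f r"
    by (simp add: strip_def)
  moreover have "r \<in> {0..<int N}" using \<open>0 < N\<close> by (simp add: r_def)
  moreover have "f y \<le> strip N x f y" for y
    using reg monoD[OF mono, of y "y + 1"] by (simp add: strip_def regressive_def)
  ultimately show ?thesis
    unfolding defect_def by (intro sum_strict_mono_ex1) auto
qed

lemma NDPF_imp_word:
  assumes N: "2 \<le> N"
  shows "f \<in> NDPF N \<Longrightarrow> \<exists>w. set w \<subseteq> {..<N} \<and> f = word N w"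
proof (induction "nat (defect N f)" arbitrary: f rule: less_induct)
  case less
  show ?case
  proof (cases "f = id")
    case True
    then show ?thesis by (intro exI[of _ "[]"]) simp
  next
    case False
    obtain z where "f (z - 1) = f z"
      using NDPF_collapse[OF less.prems _ False] N by auto
    then obtain x where plateau: "f (x - 1) = f x" and rise: "f x < f (x + 1)"
      using NDPF_plateau_end[OF less.prems] N by auto
    obtain i where "i < N" and fgen_i: "\<forall>y. fgen N i y = (if int N dvd y - x then y - 1 else y)"
      using ex_fgen_lowering_class[of N x] N by auto
    have "strip N x f \<in> NDPF N"
      using strip_in_NDPF[OF less.prems N] .
    moreover have "f = mul (fgen N i) (strip N x f)"
      using strip_factor[OF _ N plateau fgen_i] less.prems by (simp add: NDPF_iff)
    moreover have "nat (defect N (strip N x f)) < nat (defect N f)"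
      using defect_strip_less[OF less.prems _ plateau rise] defect_nonneg[of "strip N x f" N]
        \<open>strip N x f \<in> NDPF N\<close> N by (simp add: NDPF_iff)
    ultimately obtain w where "set w \<subseteq> {..<N}" "f = word N (i # w)"
      using less.hyps by force
    then show ?thesis using \<open>i < N\<close> by (intro exI[of _ "i # w"]) simp
  qed
qed

lemma NDPF_eq_words: "2 \<le> N \<Longrightarrow> NDPF N = {word N w | w. set w \<subseteq> {..<N}}"
  using NDPF_imp_word word_in_NDPF by blast

theorem mainTheorem6:
  fixes N :: nat
  assumes "N \<ge> 3"
  shows "NDPF N = {word N w | w. set w \<subseteq> {..<N}}
       \<and> (\<forall>i<N. mul (fgen N i) (fgen N i) = fgen N i)
       \<and> (\<forall>i<N. \<forall>j<N. j \<noteq> (i + 1) mod N \<and> i \<noteq> (j + 1) mod N \<longrightarrow>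
              mul (fgen N i) (fgen N j) = mul (fgen N j) (fgen N i))
       \<and> (\<forall>i<N. mul (mul (fgen N i) (fgen N ((i + 1) mod N))) (fgen N i)
                 = mul (fgen N ((i + 1) mod N)) (fgen N i)
             \<and> mul (mul (fgen N ((i + 1) mod N)) (fgen N i)) (fgen N ((i + 1) mod N))
                 = mul (fgen N ((i + 1) mod N)) (fgen N i))"
proof -
  have N: "2 \<le> N" using assms by simp
  show ?thesis
    using NDPF_eq_words[OF N] fgen_idem[OF N] fgen_comm_nonadjacent fgen_braid[OF assms]
    by (simp add: mul_def fgen_mod comp_assoc)
qed

end
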